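(* Let $R$ be a ring and $M$ a right $R$-module such that the ring $\operatorname{End}_R(M)$ has no factor ring isomorphic to $\mathbb{F}_2$. Then $\operatorname{End}_R(E(M))$ also has no factor ring isomorphic to $\mathbb{F}_2$, where $E(M)$ denotes the injective hull of $M$.
   Context: All rings are associative with identity; modules are unital right modules. $\mathbb{F}_2$ is the field with two elements. A ring $T$ "has a factor isomorphic to $\mathbb{F}_2$" if there is a two-sided ideal $I$ of $T$ with $T/I\cong \mathbb{F}_2$, equivalently if there exists a unital ring homomorphism $T\to\mathbb{F}_2$. *)

theory Defs
  imports "HOL-Algebra.Algebra"
begin

text \<open>A right module over R: an abelian group (additive part of a ring record)
  together with a right scalar action.\<close>
record ('a, 'b) rmodule = "'b ring" +
  rsmult :: "'b \<Rightarrow> 'a \<Rightarrow> 'b"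

definition right_module :: "('a, 'c) ring_scheme \<Rightarrow> ('a, 'b, 'd) rmodule_scheme \<Rightarrow> bool" where
  "right_module R M \<longleftrightarrow> ring R \<and> abelian_group M \<and>
     (\<forall>x\<in>carrier M. \<forall>r\<in>carrier R. rsmult M x r \<in> carrier M) \<and>
     (\<forall>x\<in>carrier M. \<forall>y\<in>carrier M. \<forall>r\<in>carrier R.
        rsmult M (x \<oplus>\<^bsub>M\<^esub> y) r = rsmult M x r \<oplus>\<^bsub>M\<^esub> rsmult M y r) \<and>
     (\<forall>x\<in>carrier M. \<forall>r\<in>carrier R. \<forall>s\<in>carrier R.
        rsmult M x (r \<oplus>\<^bsub>R\<^esub> s) = rsmult M x r \<oplus>\<^bsub>M\<^esub> rsmult M x s) \<and>
     (\<forall>x\<in>carrier M. \<forall>r\<in>carrier R. \<forall>s\<in>carrier R.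
        rsmult M x (r \<otimes>\<^bsub>R\<^esub> s) = rsmult M (rsmult M x r) s) \<and>
     (\<forall>x\<in>carrier M. rsmult M x \<one>\<^bsub>R\<^esub> = x)"

definition rmod_hom ::
  "('a, 'c) ring_scheme \<Rightarrow> ('a, 'b, 'd) rmodule_scheme \<Rightarrow> ('a, 'e, 'f) rmodule_scheme
     \<Rightarrow> ('b \<Rightarrow> 'e) set" where
  "rmod_hom R M N = {f. f \<in> carrier M \<rightarrow>\<^sub>E carrier N \<and>
     (\<forall>x\<in>carrier M. \<forall>y\<in>carrier M. f (x \<oplus>\<^bsub>M\<^esub> y) = f x \<oplus>\<^bsub>N\<^esub> f y) \<and>
     (\<forall>x\<in>carrier M. \<forall>r\<in>carrier R. f (rsmult M x r) = rsmult N (f x) r)}"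

definition End_ring ::
  "('a, 'c) ring_scheme \<Rightarrow> ('a, 'b, 'd) rmodule_scheme \<Rightarrow> ('b \<Rightarrow> 'b) ring" where
  "End_ring R M =
     \<lparr> carrier = rmod_hom R M M,
       monoid.mult = (\<lambda>f g. \<lambda>x\<in>carrier M. f (g x)),
       one = (\<lambda>x\<in>carrier M. x),
       ring.zero = (\<lambda>x\<in>carrier M. \<zero>\<^bsub>M\<^esub>),
       ring.add = (\<lambda>f g. \<lambda>x\<in>carrier M. f x \<oplus>\<^bsub>M\<^esub> g x) \<rparr>"

definition F2 :: "int set ring" where
  "F2 = ZFact 2"

definition has_F2_factor :: "('b, 'c) ring_scheme \<Rightarrow> bool" where
  "has_F2_factor T \<longleftrightarrow> (\<exists>I. ideal I T \<and> (T Quot I) \<simeq> F2)"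

definition rsubmodule ::
  "('a, 'c) ring_scheme \<Rightarrow> ('a, 'b, 'd) rmodule_scheme \<Rightarrow> 'b set \<Rightarrow> bool" where
  "rsubmodule R M N \<longleftrightarrow> N \<subseteq> carrier M \<and> \<zero>\<^bsub>M\<^esub> \<in> N \<and>
     (\<forall>x\<in>N. \<forall>y\<in>N. x \<oplus>\<^bsub>M\<^esub> y \<in> N) \<and> (\<forall>x\<in>N. \<ominus>\<^bsub>M\<^esub> x \<in> N) \<and>
     (\<forall>x\<in>N. \<forall>r\<in>carrier R. rsmult M x r \<in> N)"

definition essential_rsubmodule ::
  "('a, 'c) ring_scheme \<Rightarrow> ('a, 'b, 'd) rmodule_scheme \<Rightarrow> 'b set \<Rightarrow> bool" where
  "essential_rsubmodule R M N \<longleftrightarrow> rsubmodule R M N \<and>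
     (\<forall>K. rsubmodule R M K \<and> K \<noteq> {\<zero>\<^bsub>M\<^esub>} \<longrightarrow> K \<inter> N \<noteq> {\<zero>\<^bsub>M\<^esub>})"

definition right_ideal :: "('a, 'c) ring_scheme \<Rightarrow> 'a set \<Rightarrow> bool" where
  "right_ideal R I \<longleftrightarrow> additive_subgroup I R \<and>
     (\<forall>a\<in>I. \<forall>r\<in>carrier R. a \<otimes>\<^bsub>R\<^esub> r \<in> I)"

text \<open>Injective right module, via Baer's criterion: every R-linear map from a right
  ideal of R into E is given by left multiplication by an element of E.\<close>
definition injective_rmodule ::
  "('a, 'c) ring_scheme \<Rightarrow> ('a, 'b, 'd) rmodule_scheme \<Rightarrow> bool" where
  "injective_rmodule R E \<longleftrightarrow> right_module R E \<and>
     (\<forall>I f. right_ideal R I \<and> f \<in> I \<rightarrow> carrier E \<and>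
        (\<forall>a\<in>I. \<forall>b\<in>I. f (a \<oplus>\<^bsub>R\<^esub> b) = f a \<oplus>\<^bsub>E\<^esub> f b) \<and>
        (\<forall>a\<in>I. \<forall>r\<in>carrier R. f (a \<otimes>\<^bsub>R\<^esub> r) = rsmult E (f a) r)
      \<longrightarrow> (\<exists>e\<in>carrier E. \<forall>a\<in>I. f a = rsmult E e a))"

definition injective_hull ::
  "('a, 'c) ring_scheme \<Rightarrow> ('a, 'b, 'd) rmodule_scheme \<Rightarrow> ('a, 'e, 'f) rmodule_scheme
     \<Rightarrow> ('b \<Rightarrow> 'e) \<Rightarrow> bool" where
  "injective_hull R M E i \<longleftrightarrow> injective_rmodule R E \<and>
     i \<in> rmod_hom R M E \<and> inj_on i (carrier M) \<and>
     essential_rsubmodule R E (i ` carrier M)"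

end

(* An endomorphism t of M extends, by injectivity of E, to an endomorphism of E.  Given a unital
   ring homomorphism h from End(E) onto F2, h(s) depends only on the restriction of s to M: if s
   vanishes on M, then 1 - s is the identity on the essential submodule M, hence injective, hence
   has a left inverse by injectivity of E; so h(1 - s) is a unit of F2, i.e. 1, and h(s) = 0.
   Thus t |-> h(extension of t) is a well-defined ring homomorphism from End(M) onto F2. *)

theory Submission
  imports Defs
begin

section \<open>The field with two elements\<close>

lemma cring_F2: "cring F2"
  by (simp add: F2_def ZFact_is_cring)

lemma domain_F2: "domain F2"
  unfolding F2_def by (rule ZFact_prime_is_domain) simp

lemma carrier_F2: "carrier F2 = {\<zero>\<^bsub>F2\<^esub>, \<one>\<^bsub>F2\<^esub>}"
proof -
  interpret I: ideal "Idl\<^bsub>\<Z>\<^esub> {2}" \<Z> by (rule int.genideal_ideal) simp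
  have coset_mod: "Idl\<^bsub>\<Z>\<^esub> {2} +>\<^bsub>\<Z>\<^esub> a = Idl\<^bsub>\<Z>\<^esub> {2} +>\<^bsub>\<Z>\<^esub> (a mod 2)" for a :: int
  proof (rule I.a_repr_independence')
    have mem: "- (a div 2) * 2 \<in> {x * 2 |x. True}" by blast
    have eq: "a mod 2 = - (a div 2) * 2 \<oplus>\<^bsub>\<Z>\<^esub> a"
      using minus_div_mult_eq_mod[of a 2] by simp
    show "a mod 2 \<in> Idl\<^bsub>\<Z>\<^esub> {2} +>\<^bsub>\<Z>\<^esub> a"
      unfolding int_Idl a_r_coset_def' by (rule UN_I[OF mem]) (simp only: eq singleton_iff)
  qed simp
  have "Idl\<^bsub>\<Z>\<^esub> {2} +>\<^bsub>\<Z>\<^esub> a \<in> {Idl\<^bsub>\<Z>\<^esub> {2}, Idl\<^bsub>\<Z>\<^esub> {2} +>\<^bsub>\<Z>\<^esub> 1}" for a :: int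
  proof (cases "a mod 2 = 0")
    case True
    then show ?thesis
      using coset_mod[of a] I.a_rcos_const[of 0] by simp
  next
    case False
    then have "a mod 2 = 1" by (simp add: not_mod_2_eq_0_eq_1)
    then show ?thesis
      using coset_mod[of a] by simp
  qed
  then show ?thesis
    by (auto simp: F2_def ZFact_defs A_RCOSETS_def')
qed

lemma has_F2_factor_iff_ring_hom:
  assumes "ring T"
  shows "has_F2_factor T \<longleftrightarrow> ring_hom T F2 \<noteq> {}"
proof
  assume "has_F2_factor T"
  then obtain I j where I: "ideal I T" and j: "j \<in> ring_iso (T Quot I) F2"
    unfolding has_F2_factor_def is_ring_iso_def by blast
  have "j \<in> ring_hom (T Quot I) F2"
    using j by (simp add: ring_iso_def)
  then have "j \<circ> (+>\<^bsub>T\<^esub>) I \<in> ring_hom T F2"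
    by (rule ring_hom_trans[OF ideal.rcos_ring_hom[OF I]])
  then show "ring_hom T F2 \<noteq> {}" by blast
next
  assume "ring_hom T F2 \<noteq> {}"
  then obtain h where h: "h \<in> ring_hom T F2" by blast
  interpret h: ring_hom_ring T F2 h
    using ring_hom_ringI2[OF assms _ h] cring_F2 cring.axioms(1) by blast
  have "h ` carrier T = carrier F2"
  proof
    show "h ` carrier T \<subseteq> carrier F2"
      using h.hom_closed by blast
    have "\<zero>\<^bsub>F2\<^esub> \<in> h ` carrier T"
      using h.hom_zero[symmetric] by (rule image_eqI) simp
    moreover have "\<one>\<^bsub>F2\<^esub> \<in> h ` carrier T"
      using h.hom_one[symmetric] by (rule image_eqI) simp
    ultimately show "carrier F2 \<subseteq> h ` carrier T"
      by (simp add: carrier_F2)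
  qed
  then have "T Quot (a_kernel T F2 h) \<simeq> F2" by (rule h.FactRing_iso)
  with h.kernel_is_ideal show "has_F2_factor T"
    unfolding has_F2_factor_def by (intro exI conjI)
qed

lemma ring_hom_F2_left_invertible:
  assumes "ring S" "h \<in> ring_hom S F2"
    and "u \<in> carrier S" "w \<in> carrier S" "w \<otimes>\<^bsub>S\<^esub> u = \<one>\<^bsub>S\<^esub>"
  shows "h u = \<one>\<^bsub>F2\<^esub>"
proof (rule ccontr)
  interpret F2: domain F2 by (rule domain_F2)
  have hw: "h w \<in> carrier F2" and hu: "h u \<in> carrier F2"
    using ring_hom_closed[OF assms(2)] assms(3,4) by simp_all
  assume "h u \<noteq> \<one>\<^bsub>F2\<^esub>"
  with hu have "h u = \<zero>\<^bsub>F2\<^esub>"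
    by (simp add: carrier_F2)
  then have "h w \<otimes>\<^bsub>F2\<^esub> h u = \<zero>\<^bsub>F2\<^esub>"
    using hw by simp
  moreover have "h w \<otimes>\<^bsub>F2\<^esub> h u = \<one>\<^bsub>F2\<^esub>"
    using ring_hom_mult[OF assms(2,4,3)] ring_hom_one[OF assms(2)] assms(5) by simp
  ultimately show False
    by simp
qed

section \<open>Right modules and their endomorphism rings\<close>

lemma rmod_hom_closed: "f \<in> rmod_hom R M N \<Longrightarrow> x \<in> carrier M \<Longrightarrow> f x \<in> carrier N"
  by (auto simp: rmod_hom_def)

lemma rmod_hom_add:
  "f \<in> rmod_hom R M N \<Longrightarrow> x \<in> carrier M \<Longrightarrow> y \<in> carrier M \<Longrightarrow>
   f (x \<oplus>\<^bsub>M\<^esub> y) = f x \<oplus>\<^bsub>N\<^esub> f y"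
  by (auto simp: rmod_hom_def)

lemma rmod_hom_rsmult:
  "f \<in> rmod_hom R M N \<Longrightarrow> x \<in> carrier M \<Longrightarrow> r \<in> carrier R \<Longrightarrow>
   f (rsmult M x r) = rsmult N (f x) r"
  by (auto simp: rmod_hom_def)

lemma rmod_hom_restrict: "f \<in> rmod_hom R M N \<Longrightarrow> restrict f (carrier M) = f"
  by (auto simp: rmod_hom_def)

lemma rmod_homI:
  assumes "\<And>x. x \<in> carrier M \<Longrightarrow> f x \<in> carrier N"
    and "\<And>x. x \<notin> carrier M \<Longrightarrow> f x = undefined"
    and "\<And>x y. x \<in> carrier M \<Longrightarrow> y \<in> carrier M \<Longrightarrow> f (x \<oplus>\<^bsub>M\<^esub> y) = f x \<oplus>\<^bsub>N\<^esub> f y"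
    and "\<And>x r. x \<in> carrier M \<Longrightarrow> r \<in> carrier R \<Longrightarrow> f (rsmult M x r) = rsmult N (f x) r"
  shows "f \<in> rmod_hom R M N"
  using assms by (auto simp: rmod_hom_def)

lemma End_ring_simps [simp]:
  shows "carrier (End_ring R M) = rmod_hom R M M"
    and "f \<otimes>\<^bsub>End_ring R M\<^esub> g = (\<lambda>x\<in>carrier M. f (g x))"
    and "f \<oplus>\<^bsub>End_ring R M\<^esub> g = (\<lambda>x\<in>carrier M. f x \<oplus>\<^bsub>M\<^esub> g x)"
    and "\<one>\<^bsub>End_ring R M\<^esub> = (\<lambda>x\<in>carrier M. x)"
    and "\<zero>\<^bsub>End_ring R M\<^esub> = (\<lambda>x\<in>carrier M. \<zero>\<^bsub>M\<^esub>)"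
  by (simp_all add: End_ring_def)

lemma (in abelian_group) add_eq_add_iff_diff_eq:
  assumes "a \<in> carrier G" "c \<in> carrier G" "a' \<in> carrier G" "c' \<in> carrier G"
  shows "a \<oplus> c = a' \<oplus> c' \<longleftrightarrow> c \<ominus> c' = a' \<ominus> a"
proof -
  have "c \<ominus> c' = a' \<ominus> a \<longleftrightarrow> c = (a' \<ominus> a) \<oplus> c'"
    using assms by (simp add: minus_eq add.inv_solve_right')
  also have "\<dots> \<longleftrightarrow> a \<oplus> c = a \<oplus> ((a' \<ominus> a) \<oplus> c')"
    using assms by (simp add: minus_eq)
  also have "a \<oplus> ((a' \<ominus> a) \<oplus> c') = a' \<oplus> c'"
    using assms by (simp add: minus_eq a_assoc a_lcomm[of a'] r_neg2)
  finally show ?thesis by simp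
qed

locale rmod =
  fixes R :: "('a, 'c) ring_scheme" and M :: "('a, 'b, 'd) rmodule_scheme"
  assumes right_module: "right_module R M"

sublocale rmod \<subseteq> R: ring R
  using right_module by (simp add: right_module_def)

sublocale rmod \<subseteq> abelian_group M
  using right_module by (simp add: right_module_def)

context rmod
begin

lemma rsmult_closed [simp]: "x \<in> carrier M \<Longrightarrow> r \<in> carrier R \<Longrightarrow> rsmult M x r \<in> carrier M"
  using right_module by (simp add: right_module_def)

lemma rsmult_add_left:
  "x \<in> carrier M \<Longrightarrow> y \<in> carrier M \<Longrightarrow> r \<in> carrier R \<Longrightarrow>
   rsmult M (x \<oplus>\<^bsub>M\<^esub> y) r = rsmult M x r \<oplus>\<^bsub>M\<^esub> rsmult M y r"
  using right_module by (simp add: right_module_def)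

lemma rsmult_add_right:
  "x \<in> carrier M \<Longrightarrow> r \<in> carrier R \<Longrightarrow> s \<in> carrier R \<Longrightarrow>
   rsmult M x (r \<oplus>\<^bsub>R\<^esub> s) = rsmult M x r \<oplus>\<^bsub>M\<^esub> rsmult M x s"
  using right_module by (simp add: right_module_def)

lemma rsmult_assoc:
  "x \<in> carrier M \<Longrightarrow> r \<in> carrier R \<Longrightarrow> s \<in> carrier R \<Longrightarrow>
   rsmult M x (r \<otimes>\<^bsub>R\<^esub> s) = rsmult M (rsmult M x r) s"
  using right_module by (simp add: right_module_def)

lemma rsmult_one [simp]: "x \<in> carrier M \<Longrightarrow> rsmult M x \<one>\<^bsub>R\<^esub> = x"
  using right_module by (simp add: right_module_def)

lemma rsmult_zero_right [simp]: "x \<in> carrier M \<Longrightarrow> rsmult M x \<zero>\<^bsub>R\<^esub> = \<zero>\<^bsub>M\<^esub>"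
  using rsmult_add_right[of x "\<zero>\<^bsub>R\<^esub>" "\<zero>\<^bsub>R\<^esub>"] by simp

lemma rsmult_zero_left [simp]: "r \<in> carrier R \<Longrightarrow> rsmult M \<zero>\<^bsub>M\<^esub> r = \<zero>\<^bsub>M\<^esub>"
  using rsmult_add_left[of "\<zero>\<^bsub>M\<^esub>" "\<zero>\<^bsub>M\<^esub>" r] by simp

lemma rsmult_minus_right:
  assumes "x \<in> carrier M" "r \<in> carrier R"
  shows "rsmult M x (\<ominus>\<^bsub>R\<^esub> r) = \<ominus>\<^bsub>M\<^esub> rsmult M x r"
proof -
  have "rsmult M x (\<ominus>\<^bsub>R\<^esub> r) \<oplus>\<^bsub>M\<^esub> rsmult M x r = \<zero>\<^bsub>M\<^esub>"
    using rsmult_add_right[of x "\<ominus>\<^bsub>R\<^esub> r" r] assms by (simp add: R.l_neg)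
  then show ?thesis
    by (rule minus_equality[symmetric]) (use assms in simp_all)
qed

lemma rsmult_minus_left:
  assumes "x \<in> carrier M" "r \<in> carrier R"
  shows "rsmult M (\<ominus>\<^bsub>M\<^esub> x) r = \<ominus>\<^bsub>M\<^esub> rsmult M x r"
proof -
  have "rsmult M (\<ominus>\<^bsub>M\<^esub> x) r \<oplus>\<^bsub>M\<^esub> rsmult M x r = \<zero>\<^bsub>M\<^esub>"
    using rsmult_add_left[of "\<ominus>\<^bsub>M\<^esub> x" x r] assms by (simp add: l_neg)
  then show ?thesis
    by (rule minus_equality[symmetric]) (use assms in simp_all)
qed

lemma rsmult_diff_right:
  "x \<in> carrier M \<Longrightarrow> r \<in> carrier R \<Longrightarrow> s \<in> carrier R \<Longrightarrow>
   rsmult M x (r \<ominus>\<^bsub>R\<^esub> s) = rsmult M x r \<ominus>\<^bsub>M\<^esub> rsmult M x s"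
  by (simp add: R.minus_eq minus_eq rsmult_add_right rsmult_minus_right)

lemma hom_sum_closed:
  assumes f: "f \<in> rmod_hom R M M" and g: "g \<in> rmod_hom R M M"
  shows "(\<lambda>x\<in>carrier M. f x \<oplus>\<^bsub>M\<^esub> g x) \<in> rmod_hom R M M"
proof (rule rmod_homI)
  fix x y assume x: "x \<in> carrier M" and y: "y \<in> carrier M"
  have "f (x \<oplus>\<^bsub>M\<^esub> y) \<oplus>\<^bsub>M\<^esub> g (x \<oplus>\<^bsub>M\<^esub> y) = (f x \<oplus>\<^bsub>M\<^esub> g x) \<oplus>\<^bsub>M\<^esub> (f y \<oplus>\<^bsub>M\<^esub> g y)"
    using x y f g by (simp add: rmod_hom_add rmod_hom_closed a_ac)
  then show "(\<lambda>x\<in>carrier M. f x \<oplus>\<^bsub>M\<^esub> g x) (x \<oplus>\<^bsub>M\<^esub> y) =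
     (\<lambda>x\<in>carrier M. f x \<oplus>\<^bsub>M\<^esub> g x) x \<oplus>\<^bsub>M\<^esub> (\<lambda>x\<in>carrier M. f x \<oplus>\<^bsub>M\<^esub> g x) y"
    using x y by simp
qed (use f g in \<open>auto simp: rmod_hom_closed rmod_hom_rsmult rsmult_add_left\<close>)

lemma hom_comp_closed:
  "f \<in> rmod_hom R M N \<Longrightarrow> g \<in> rmod_hom R N P \<Longrightarrow> (\<lambda>x\<in>carrier M. g (f x)) \<in> rmod_hom R M P"
  by (rule rmod_homI) (simp_all add: rmod_hom_closed rmod_hom_add rmod_hom_rsmult)

lemma hom_id_closed: "(\<lambda>x\<in>carrier M. x) \<in> rmod_hom R M M"
  by (rule rmod_homI) auto

lemma hom_zero_closed: "(\<lambda>x\<in>carrier M. \<zero>\<^bsub>M\<^esub>) \<in> rmod_hom R M M"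
  by (rule rmod_homI) auto

lemma hom_minus_closed: "f \<in> rmod_hom R M M \<Longrightarrow> (\<lambda>x\<in>carrier M. \<ominus>\<^bsub>M\<^esub> f x) \<in> rmod_hom R M M"
  by (rule rmod_homI)
    (simp_all add: rmod_hom_closed rmod_hom_add rmod_hom_rsmult rsmult_minus_left minus_add a_comm)

lemma ring_End_ring: "ring (End_ring R M)"
proof (rule ringI)
  show "abelian_group (End_ring R M)"
  proof (rule abelian_groupI, goal_cases)
    case (6 f)
    then show ?case
      by (intro bexI[of _ "\<lambda>x\<in>carrier M. \<ominus>\<^bsub>M\<^esub> f x"])
        (simp_all add: rmod_hom_closed l_neg hom_minus_closed cong: restrict_cong)
  qed (simp_all add: hom_sum_closed hom_zero_closed rmod_hom_closed rmod_hom_restrict a_ac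
      cong: restrict_cong)
next
  show "monoid (End_ring R M)"
    by (rule monoidI)
      (simp_all add: hom_comp_closed hom_id_closed rmod_hom_closed rmod_hom_restrict cong: restrict_cong)
qed (auto simp: rmod_hom_closed rmod_hom_add cong: restrict_cong)

lemma End_ring_minus_apply:
  assumes f: "f \<in> rmod_hom R M M" and g: "g \<in> rmod_hom R M M" and x: "x \<in> carrier M"
  shows "(f \<ominus>\<^bsub>End_ring R M\<^esub> g) x = f x \<ominus>\<^bsub>M\<^esub> g x"
proof -
  interpret End: ring "End_ring R M" by (rule ring_End_ring)
  have "\<ominus>\<^bsub>End_ring R M\<^esub> g = (\<lambda>x\<in>carrier M. \<ominus>\<^bsub>M\<^esub> g x)"
    using g by (intro End.minus_equality)
      (auto simp: hom_minus_closed rmod_hom_closed l_neg)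
  then show ?thesis
    using x by (simp add: End.minus_eq minus_eq)
qed

end

locale rmod_pair = M: rmod R M + N: rmod R N
  for R :: "('a, 'c) ring_scheme"
    and M :: "('a, 'b, 'd) rmodule_scheme" and N :: "('a, 'e, 'f) rmodule_scheme"

section \<open>Injective modules\<close>

definition linear_graph ::
  "('a, 'c) ring_scheme \<Rightarrow> ('a, 'b, 'd) rmodule_scheme \<Rightarrow> ('a, 'e, 'f) rmodule_scheme
     \<Rightarrow> ('b \<times> 'e) set \<Rightarrow> bool" where
  "linear_graph R M N G \<longleftrightarrow> G \<subseteq> carrier M \<times> carrier N \<and>
     (\<forall>a b b'. (a, b) \<in> G \<longrightarrow> (a, b') \<in> G \<longrightarrow> b = b') \<and>
     (\<forall>a b a' b'. (a, b) \<in> G \<longrightarrow> (a', b') \<in> G \<longrightarrow> (a \<oplus>\<^bsub>M\<^esub> a', b \<oplus>\<^bsub>N\<^esub> b') \<in> G) \<and>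
     (\<forall>a b r. (a, b) \<in> G \<longrightarrow> r \<in> carrier R \<longrightarrow> (rsmult M a r, rsmult N b r) \<in> G)"

lemma injective_rmoduleD:
  assumes "injective_rmodule R E" "right_ideal R I" "f \<in> I \<rightarrow> carrier E"
    and "\<And>a b. a \<in> I \<Longrightarrow> b \<in> I \<Longrightarrow> f (a \<oplus>\<^bsub>R\<^esub> b) = f a \<oplus>\<^bsub>E\<^esub> f b"
    and "\<And>a r. a \<in> I \<Longrightarrow> r \<in> carrier R \<Longrightarrow> f (a \<otimes>\<^bsub>R\<^esub> r) = rsmult E (f a) r"
  shows "\<exists>e\<in>carrier E. \<forall>a\<in>I. f a = rsmult E e a"
  using assms unfolding injective_rmodule_def by blast

lemma linear_graphD:
  assumes "linear_graph R M N G"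
  shows linear_graph_carrier: "(a, b) \<in> G \<Longrightarrow> a \<in> carrier M \<and> b \<in> carrier N"
    and linear_graph_functional: "(a, b) \<in> G \<Longrightarrow> (a, b') \<in> G \<Longrightarrow> b = b'"
    and linear_graph_add: "(a, b) \<in> G \<Longrightarrow> (a', b') \<in> G \<Longrightarrow> (a \<oplus>\<^bsub>M\<^esub> a', b \<oplus>\<^bsub>N\<^esub> b') \<in> G"
    and linear_graph_rsmult:
      "(a, b) \<in> G \<Longrightarrow> r \<in> carrier R \<Longrightarrow> (rsmult M a r, rsmult N b r) \<in> G"
  using assms unfolding linear_graph_def by blast+

lemma linear_graph_Union:
  assumes "subset.chain {G. linear_graph R M N G} C"
  shows "linear_graph R M N (\<Union>C)"
proof -
  have C: "\<And>G. G \<in> C \<Longrightarrow> linear_graph R M N G"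
    and comparable: "\<And>U V. U \<in> C \<Longrightarrow> V \<in> C \<Longrightarrow> U \<subseteq> V \<or> V \<subseteq> U"
    using assms by (auto simp: subset_chain_def)
  have common: "\<exists>G\<in>C. p \<in> G \<and> q \<in> G" if "p \<in> \<Union>C" "q \<in> \<Union>C" for p q
    using that comparable by blast
  show ?thesis
    unfolding linear_graph_def
  proof (intro conjI allI impI subsetI)
    fix p assume "p \<in> \<Union>C"
    then obtain G where "G \<in> C" "p \<in> G"
      by blast
    then show "p \<in> carrier M \<times> carrier N"
      using linear_graph_carrier[OF C] by (cases p) blast
  next
    fix a b b' assume "(a, b) \<in> \<Union>C" "(a, b') \<in> \<Union>C"
    then obtain G where "G \<in> C" "(a, b) \<in> G" "(a, b') \<in> G"
      using common by blast
    then show "b = b'"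
      using linear_graph_functional[OF C] by blast
  next
    fix a b a' b' assume "(a, b) \<in> \<Union>C" "(a', b') \<in> \<Union>C"
    then obtain G where "G \<in> C" "(a, b) \<in> G" "(a', b') \<in> G"
      using common by blast
    then show "(a \<oplus>\<^bsub>M\<^esub> a', b \<oplus>\<^bsub>N\<^esub> b') \<in> \<Union>C"
      using linear_graph_add[OF C] by blast
  next
    fix a b r assume "(a, b) \<in> \<Union>C" "r \<in> carrier R"
    then obtain G where "G \<in> C" "(a, b) \<in> G"
      by blast
    with \<open>r \<in> carrier R\<close> show "(rsmult M a r, rsmult N b r) \<in> \<Union>C"
      using linear_graph_rsmult[OF C] by blast
  qed
qed

context rmod_pair
begin

lemma hom_zero:
  assumes "f \<in> rmod_hom R M N"
  shows "f \<zero>\<^bsub>M\<^esub> = \<zero>\<^bsub>N\<^esub>"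
proof -
  have "f \<zero>\<^bsub>M\<^esub> \<oplus>\<^bsub>N\<^esub> f \<zero>\<^bsub>M\<^esub> = f \<zero>\<^bsub>M\<^esub>"
    using rmod_hom_add[OF assms, of "\<zero>\<^bsub>M\<^esub>" "\<zero>\<^bsub>M\<^esub>"] by simp
  then show ?thesis
    using rmod_hom_closed[OF assms M.zero_closed] by simp
qed

lemma hom_minus:
  assumes f: "f \<in> rmod_hom R M N" and x: "x \<in> carrier M"
  shows "f (\<ominus>\<^bsub>M\<^esub> x) = \<ominus>\<^bsub>N\<^esub> f x"
proof -
  have "f (\<ominus>\<^bsub>M\<^esub> x) \<oplus>\<^bsub>N\<^esub> f x = \<zero>\<^bsub>N\<^esub>"
    using rmod_hom_add[OF f, of "\<ominus>\<^bsub>M\<^esub> x" x] hom_zero[OF f] x by (simp add: M.l_neg)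
  then show ?thesis
    by (rule N.minus_equality[symmetric]) (use f x in \<open>simp_all add: rmod_hom_closed\<close>)
qed

lemma hom_diff:
  "f \<in> rmod_hom R M N \<Longrightarrow> x \<in> carrier M \<Longrightarrow> y \<in> carrier M \<Longrightarrow>
   f (x \<ominus>\<^bsub>M\<^esub> y) = f x \<ominus>\<^bsub>N\<^esub> f y"
  by (simp add: M.minus_eq N.minus_eq rmod_hom_add hom_minus)

lemma kernel_rsubmodule:
  assumes f: "f \<in> rmod_hom R M N"
  shows "rsubmodule R M {x \<in> carrier M. f x = \<zero>\<^bsub>N\<^esub>}"
  using f by (auto simp: rsubmodule_def hom_zero hom_minus rmod_hom_add rmod_hom_rsmult)

lemma image_rsubmodule:
  assumes f: "f \<in> rmod_hom R M N"
  shows "rsubmodule R N (f ` carrier M)"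
  unfolding rsubmodule_def
proof (intro conjI ballI)
  show "f ` carrier M \<subseteq> carrier N"
    using rmod_hom_closed[OF f] by blast
  show "\<zero>\<^bsub>N\<^esub> \<in> f ` carrier M"
    using hom_zero[OF f, symmetric] by (rule image_eqI) simp
next
  fix y y' assume "y \<in> f ` carrier M" "y' \<in> f ` carrier M"
  then obtain x x' where x: "x \<in> carrier M" "x' \<in> carrier M" and "y = f x" "y' = f x'"
    by blast
  then have "y \<oplus>\<^bsub>N\<^esub> y' = f (x \<oplus>\<^bsub>M\<^esub> x')"
    by (simp add: rmod_hom_add[OF f])
  then show "y \<oplus>\<^bsub>N\<^esub> y' \<in> f ` carrier M"
    by (rule image_eqI) (use x in simp)
next
  fix y assume "y \<in> f ` carrier M"
  then obtain x where x: "x \<in> carrier M" and "y = f x"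
    by blast
  then have "\<ominus>\<^bsub>N\<^esub> y = f (\<ominus>\<^bsub>M\<^esub> x)"
    by (simp add: hom_minus[OF f])
  then show "\<ominus>\<^bsub>N\<^esub> y \<in> f ` carrier M"
    by (rule image_eqI) (use x in simp)
next
  fix y r assume "y \<in> f ` carrier M" and r: "r \<in> carrier R"
  then obtain x where x: "x \<in> carrier M" and "y = f x"
    by blast
  then have "rsmult N y r = f (rsmult M x r)"
    by (simp add: rmod_hom_rsmult[OF f _ r])
  then show "rsmult N y r \<in> f ` carrier M"
    by (rule image_eqI) (use x r in simp)
qed

lemma inj_on_if_essential:
  assumes f: "f \<in> rmod_hom R M N"
    and ess: "essential_rsubmodule R M K" and inj: "inj_on f K"
  shows "inj_on f (carrier M)"
proof -
  let ?ker = "{x \<in> carrier M. f x = \<zero>\<^bsub>N\<^esub>}"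
  have K: "\<zero>\<^bsub>M\<^esub> \<in> K" "K \<subseteq> carrier M"
    using ess by (auto simp: essential_rsubmodule_def rsubmodule_def)
  have "?ker \<inter> K \<subseteq> {\<zero>\<^bsub>M\<^esub>}"
  proof
    fix x assume x: "x \<in> ?ker \<inter> K"
    then have "f x = f \<zero>\<^bsub>M\<^esub>"
      by (simp add: hom_zero[OF f])
    with x show "x \<in> {\<zero>\<^bsub>M\<^esub>}"
      using inj_onD[OF inj _ _ K(1)] by simp
  qed
  then have "?ker \<inter> K = {\<zero>\<^bsub>M\<^esub>}"
    using K hom_zero[OF f] by auto
  then have ker: "?ker = {\<zero>\<^bsub>M\<^esub>}"
    using ess kernel_rsubmodule[OF f] unfolding essential_rsubmodule_def by metis
  show ?thesis
  proof (rule inj_onI)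
    fix x y assume x: "x \<in> carrier M" and y: "y \<in> carrier M" and "f x = f y"
    then have "x \<ominus>\<^bsub>M\<^esub> y \<in> ?ker"
      using f by (simp add: hom_diff rmod_hom_closed N.r_neg N.minus_eq)
    then have "x \<oplus>\<^bsub>M\<^esub> \<ominus>\<^bsub>M\<^esub> y = \<zero>\<^bsub>M\<^esub>"
      using ker by (simp add: M.minus_eq)
    then show "x = y"
      using M.add.inv_solve_right'[of "\<zero>\<^bsub>M\<^esub>" x y] x y by simp
  qed
qed

lemma linear_graph_zero:
  assumes G: "linear_graph R M N G" and "(a, b) \<in> G"
  shows "(\<zero>\<^bsub>M\<^esub>, \<zero>\<^bsub>N\<^esub>) \<in> G"
  using linear_graph_rsmult[OF G \<open>(a, b) \<in> G\<close> M.R.zero_closed] linear_graph_carrier[OF G \<open>(a, b) \<in> G\<close>]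
  by simp

lemma linear_graph_diff:
  assumes G: "linear_graph R M N G" and ab: "(a, b) \<in> G" and ab': "(a', b') \<in> G"
  shows "(a \<ominus>\<^bsub>M\<^esub> a', b \<ominus>\<^bsub>N\<^esub> b') \<in> G"
proof -
  have "(\<ominus>\<^bsub>M\<^esub> a', \<ominus>\<^bsub>N\<^esub> b') \<in> G"
    using linear_graph_rsmult[OF G ab' M.R.a_inv_closed[OF M.R.one_closed]]
      linear_graph_carrier[OF G ab']
    by (simp add: M.rsmult_minus_right N.rsmult_minus_right)
  then show ?thesis
    using linear_graph_add[OF G ab] by (simp add: M.minus_eq N.minus_eq)
qed

lemma linear_graph_scalars_right_ideal:
  assumes G: "linear_graph R M N G" "(\<zero>\<^bsub>M\<^esub>, \<zero>\<^bsub>N\<^esub>) \<in> G" and x: "x \<in> carrier M"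
  shows "right_ideal R {r \<in> carrier R. \<exists>b. (rsmult M x r, b) \<in> G}"
proof -
  define I where "I = {r \<in> carrier R. \<exists>b. (rsmult M x r, b) \<in> G}"
  have add: "r \<oplus>\<^bsub>R\<^esub> s \<in> I" if rs: "r \<in> I" "s \<in> I" for r s
  proof -
    obtain b b' where "(rsmult M x r, b) \<in> G" "(rsmult M x s, b') \<in> G"
      using rs by (auto simp: I_def)
    from linear_graph_add[OF G(1) this] show ?thesis
      using rs x by (auto simp: I_def M.rsmult_add_right)
  qed
  have mult: "r \<otimes>\<^bsub>R\<^esub> s \<in> I" if "r \<in> I" "s \<in> carrier R" for r s
    using that linear_graph_rsmult[OF G(1)] x by (auto simp: I_def M.rsmult_assoc)
  have minus: "\<ominus>\<^bsub>R\<^esub> r \<in> I" if "r \<in> I" for r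
    using mult[OF that M.R.a_inv_closed[OF M.R.one_closed]] that by (auto simp: I_def M.R.r_minus)
  have "\<zero>\<^bsub>R\<^esub> \<in> I" "I \<subseteq> carrier R"
    using G(2) x by (auto simp: I_def)
  then have "right_ideal R I"
    unfolding right_ideal_def
    by (intro conjI ballI additive_subgroupI M.R.add.subgroupI) (use add mult minus in auto)
  then show ?thesis
    by (simp add: I_def)
qed

text \<open>Baer's criterion, applied to the right ideal of scalars r with x r in the domain of G.\<close>
lemma baer_compatible_element:
  assumes inj: "injective_rmodule R N"
    and G: "linear_graph R M N G" "(\<zero>\<^bsub>M\<^esub>, \<zero>\<^bsub>N\<^esub>) \<in> G" and x: "x \<in> carrier M"
  obtains e where "e \<in> carrier N"
    and "\<And>r b. r \<in> carrier R \<Longrightarrow> (rsmult M x r, b) \<in> G \<Longrightarrow> b = rsmult N e r"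
proof -
  define I where "I = {r \<in> carrier R. \<exists>b. (rsmult M x r, b) \<in> G}"
  define \<phi> where "\<phi> r = (THE b. (rsmult M x r, b) \<in> G)" for r
  have \<phi>_eq: "\<phi> r = b" if "(rsmult M x r, b) \<in> G" for r b
    unfolding \<phi>_def using that linear_graph_functional[OF G(1)] by blast
  have \<phi>: "(rsmult M x r, \<phi> r) \<in> G" if "r \<in> I" for r
    using that \<phi>_eq by (auto simp: I_def)
  have "right_ideal R I"
    unfolding I_def using G x by (rule linear_graph_scalars_right_ideal)
  moreover have "\<phi> \<in> I \<rightarrow> carrier N"
    using \<phi> linear_graph_carrier[OF G(1)] by blast
  moreover have "\<phi> (r \<oplus>\<^bsub>R\<^esub> s) = \<phi> r \<oplus>\<^bsub>N\<^esub> \<phi> s" if "r \<in> I" "s \<in> I" for r s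
    using linear_graph_add[OF G(1) \<phi>[OF that(1)] \<phi>[OF that(2)]] that x
    by (intro \<phi>_eq) (simp add: I_def M.rsmult_add_right)
  moreover have "\<phi> (r \<otimes>\<^bsub>R\<^esub> s) = rsmult N (\<phi> r) s" if "r \<in> I" "s \<in> carrier R" for r s
    using linear_graph_rsmult[OF G(1) \<phi>[OF that(1)] that(2)] that x
    by (intro \<phi>_eq) (simp add: I_def M.rsmult_assoc)
  ultimately have "\<exists>e\<in>carrier N. \<forall>r\<in>I. \<phi> r = rsmult N e r"
    by (rule injective_rmoduleD[OF inj])
  then obtain e where e: "e \<in> carrier N" "\<And>r. r \<in> I \<Longrightarrow> \<phi> r = rsmult N e r"
    by blast
  show thesis
  proof (rule that)
    fix r b assume "r \<in> carrier R" and xr: "(rsmult M x r, b) \<in> G"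
    then have "r \<in> I"
      by (auto simp: I_def)
    then show "b = rsmult N e r"
      using \<phi>_eq[OF xr] e(2) by simp
  qed (rule e(1))
qed

lemma linear_graph_adjoin:
  assumes G: "linear_graph R M N G" and x: "x \<in> carrier M" and e: "e \<in> carrier N"
    and compatible: "\<And>r b. r \<in> carrier R \<Longrightarrow> (rsmult M x r, b) \<in> G \<Longrightarrow> b = rsmult N e r"
  shows "linear_graph R M N
    {(a \<oplus>\<^bsub>M\<^esub> rsmult M x r, b \<oplus>\<^bsub>N\<^esub> rsmult N e r) | a b r. (a, b) \<in> G \<and> r \<in> carrier R}"
    (is "linear_graph R M N ?G'")
  unfolding linear_graph_def
proof (intro conjI allI impI subsetI)
  fix p assume "p \<in> ?G'"
  then show "p \<in> carrier M \<times> carrier N"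
    using linear_graph_carrier[OF G] x e by auto
next
  fix p q q' assume "(p, q) \<in> ?G'" "(p, q') \<in> ?G'"
  then obtain a b r a' b' r' where
    ab: "(a, b) \<in> G" "r \<in> carrier R" "p = a \<oplus>\<^bsub>M\<^esub> rsmult M x r" "q = b \<oplus>\<^bsub>N\<^esub> rsmult N e r" and
    ab': "(a', b') \<in> G" "r' \<in> carrier R" "p = a' \<oplus>\<^bsub>M\<^esub> rsmult M x r'" "q' = b' \<oplus>\<^bsub>N\<^esub> rsmult N e r'"
    by blast
  have carr: "a \<in> carrier M" "b \<in> carrier N" "a' \<in> carrier M" "b' \<in> carrier N"
    using linear_graph_carrier[OF G] ab(1) ab'(1) by auto
  have "rsmult M x (r \<ominus>\<^bsub>R\<^esub> r') = a' \<ominus>\<^bsub>M\<^esub> a"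
    using M.add_eq_add_iff_diff_eq[of a "rsmult M x r" a' "rsmult M x r'"] ab ab' carr x
    by (simp add: M.rsmult_diff_right)
  then have "(rsmult M x (r \<ominus>\<^bsub>R\<^esub> r'), b' \<ominus>\<^bsub>N\<^esub> b) \<in> G"
    using linear_graph_diff[OF G ab'(1) ab(1)] by simp
  then have "b' \<ominus>\<^bsub>N\<^esub> b = rsmult N e (r \<ominus>\<^bsub>R\<^esub> r')"
    by (rule compatible[rotated]) (use ab(2) ab'(2) in simp)
  also have "\<dots> = rsmult N e r \<ominus>\<^bsub>N\<^esub> rsmult N e r'"
    using e ab(2) ab'(2) by (simp add: N.rsmult_diff_right)
  finally show "q = q'"
    using N.add_eq_add_iff_diff_eq[of b "rsmult N e r" b' "rsmult N e r'"] ab ab' carr e by simp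
next
  fix p q p' q' assume "(p, q) \<in> ?G'" "(p', q') \<in> ?G'"
  then obtain a b r a' b' r' where
    ab: "(a, b) \<in> G" "r \<in> carrier R" "p = a \<oplus>\<^bsub>M\<^esub> rsmult M x r" "q = b \<oplus>\<^bsub>N\<^esub> rsmult N e r" and
    ab': "(a', b') \<in> G" "r' \<in> carrier R" "p' = a' \<oplus>\<^bsub>M\<^esub> rsmult M x r'" "q' = b' \<oplus>\<^bsub>N\<^esub> rsmult N e r'"
    by blast
  have carr: "a \<in> carrier M" "b \<in> carrier N" "a' \<in> carrier M" "b' \<in> carrier N"
    using linear_graph_carrier[OF G] ab(1) ab'(1) by auto
  have "p \<oplus>\<^bsub>M\<^esub> p' = (a \<oplus>\<^bsub>M\<^esub> a') \<oplus>\<^bsub>M\<^esub> rsmult M x (r \<oplus>\<^bsub>R\<^esub> r')"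
    using ab ab' carr x by (simp add: M.rsmult_add_right M.a_ac)
  moreover have "q \<oplus>\<^bsub>N\<^esub> q' = (b \<oplus>\<^bsub>N\<^esub> b') \<oplus>\<^bsub>N\<^esub> rsmult N e (r \<oplus>\<^bsub>R\<^esub> r')"
    using ab ab' carr e by (simp add: N.rsmult_add_right N.a_ac)
  moreover have "(a \<oplus>\<^bsub>M\<^esub> a', b \<oplus>\<^bsub>N\<^esub> b') \<in> G"
    using linear_graph_add[OF G ab(1) ab'(1)] .
  ultimately show "(p \<oplus>\<^bsub>M\<^esub> p', q \<oplus>\<^bsub>N\<^esub> q') \<in> ?G'"
    using ab(2) ab'(2) by blast
next
  fix p q s assume "(p, q) \<in> ?G'" and s: "s \<in> carrier R"
  then obtain a b r where
    ab: "(a, b) \<in> G" "r \<in> carrier R" "p = a \<oplus>\<^bsub>M\<^esub> rsmult M x r" "q = b \<oplus>\<^bsub>N\<^esub> rsmult N e r"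
    by blast
  have carr: "a \<in> carrier M" "b \<in> carrier N"
    using linear_graph_carrier[OF G ab(1)] by auto
  have "rsmult M p s = rsmult M a s \<oplus>\<^bsub>M\<^esub> rsmult M x (r \<otimes>\<^bsub>R\<^esub> s)"
    using ab carr x s by (simp add: M.rsmult_add_left M.rsmult_assoc)
  moreover have "rsmult N q s = rsmult N b s \<oplus>\<^bsub>N\<^esub> rsmult N e (r \<otimes>\<^bsub>R\<^esub> s)"
    using ab carr e s by (simp add: N.rsmult_add_left N.rsmult_assoc)
  moreover have "(rsmult M a s, rsmult N b s) \<in> G"
    using linear_graph_rsmult[OF G ab(1) s] .
  ultimately show "(rsmult M p s, rsmult N q s) \<in> ?G'"
    using ab(2) s by blast
qed

lemma linear_graph_total_hom:
  assumes G: "linear_graph R M N G" and total: "\<And>a. a \<in> carrier M \<Longrightarrow> \<exists>b. (a, b) \<in> G"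
  obtains g where "g \<in> rmod_hom R M N" and "\<And>a b. (a, b) \<in> G \<Longrightarrow> g a = b"
proof
  define g where "g = (\<lambda>a\<in>carrier M. THE b. (a, b) \<in> G)"
  have g: "(a, g a) \<in> G" if "a \<in> carrier M" for a
  proof -
    have "\<exists>!b. (a, b) \<in> G"
      using total[OF that] linear_graph_functional[OF G] by blast
    then have "(a, THE b. (a, b) \<in> G) \<in> G"
      by (rule theI')
    then show ?thesis
      unfolding g_def using that by simp
  qed
  show g_eq: "g a = b" if "(a, b) \<in> G" for a b
    using linear_graph_functional[OF G g that] linear_graph_carrier[OF G that] by simp
  show "g \<in> rmod_hom R M N"
  proof (rule rmod_homI)
    show "g a \<in> carrier N" if "a \<in> carrier M" for a
      using linear_graph_carrier[OF G g[OF that]] by simp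
    show "g a = undefined" if "a \<notin> carrier M" for a
      using that by (simp add: g_def)
    show "g (a \<oplus>\<^bsub>M\<^esub> a') = g a \<oplus>\<^bsub>N\<^esub> g a'" if "a \<in> carrier M" "a' \<in> carrier M" for a a'
      using g_eq[OF linear_graph_add[OF G g[OF that(1)] g[OF that(2)]]] .
    show "g (rsmult M a r) = rsmult N (g a) r" if "a \<in> carrier M" "r \<in> carrier R" for a r
      using g_eq[OF linear_graph_rsmult[OF G g[OF that(1)] that(2)]] .
  qed
qed

lemma maximal_linear_graph_total:
  assumes inj: "injective_rmodule R N"
    and G: "linear_graph R M N G" "(\<zero>\<^bsub>M\<^esub>, \<zero>\<^bsub>N\<^esub>) \<in> G"
    and max: "\<And>G'. linear_graph R M N G' \<Longrightarrow> G \<subseteq> G' \<Longrightarrow> G' = G"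
    and x: "x \<in> carrier M"
  shows "\<exists>b. (x, b) \<in> G"
proof -
  obtain e where e: "e \<in> carrier N"
    and compatible: "\<And>r b. r \<in> carrier R \<Longrightarrow> (rsmult M x r, b) \<in> G \<Longrightarrow> b = rsmult N e r"
    using baer_compatible_element[OF inj G x] by blast
  define G' where "G' = {(a \<oplus>\<^bsub>M\<^esub> rsmult M x r, b \<oplus>\<^bsub>N\<^esub> rsmult N e r) | a b r.
    (a, b) \<in> G \<and> r \<in> carrier R}"
  have "linear_graph R M N G'"
    unfolding G'_def using G(1) x e compatible by (rule linear_graph_adjoin)
  moreover have "G \<subseteq> G'"
  proof
    fix p assume "p \<in> G"
    moreover obtain a b where "p = (a, b)"
      by (cases p)
    ultimately show "p \<in> G'"
      using linear_graph_carrier[OF G(1)] x e M.R.zero_closed unfolding G'_def by force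
  qed
  ultimately have "G' = G"
    by (rule max)
  moreover have "(x, e) \<in> G'"
    using G(2) x e M.R.one_closed unfolding G'_def by force
  ultimately show ?thesis
    by blast
qed

text \<open>The extension property of injective modules, from Baer's criterion by Zorn's lemma
  applied to graphs of partial extensions.\<close>
lemma extend_from_rsubmodule:
  assumes inj: "injective_rmodule R N" and K: "rsubmodule R M K"
    and f: "\<And>x. x \<in> K \<Longrightarrow> f x \<in> carrier N"
    and f_add: "\<And>x y. x \<in> K \<Longrightarrow> y \<in> K \<Longrightarrow> f (x \<oplus>\<^bsub>M\<^esub> y) = f x \<oplus>\<^bsub>N\<^esub> f y"
    and f_rsmult: "\<And>x r. x \<in> K \<Longrightarrow> r \<in> carrier R \<Longrightarrow> f (rsmult M x r) = rsmult N (f x) r"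
  shows "\<exists>g\<in>rmod_hom R M N. \<forall>x\<in>K. g x = f x"
proof -
  have K_sub: "K \<subseteq> carrier M" and K_zero: "\<zero>\<^bsub>M\<^esub> \<in> K"
    and K_add: "\<And>x y. x \<in> K \<Longrightarrow> y \<in> K \<Longrightarrow> x \<oplus>\<^bsub>M\<^esub> y \<in> K"
    and K_rsmult: "\<And>x r. x \<in> K \<Longrightarrow> r \<in> carrier R \<Longrightarrow> rsmult M x r \<in> K"
    using K by (auto simp: rsubmodule_def)
  define F where "F = {(x, f x) | x. x \<in> K}"
  define A where "A = {G. linear_graph R M N G \<and> F \<subseteq> G}"
  have "linear_graph R M N F"
    unfolding linear_graph_def F_def
    using K_sub f f_add f_rsmult K_add K_rsmult by auto
  then have "A \<noteq> {}"
    unfolding A_def by blast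
  moreover have "\<Union>C \<in> A" if "C \<noteq> {}" and "subset.chain A C" for C
  proof -
    have "subset.chain {G. linear_graph R M N G} C"
      using that(2) by (auto simp: subset_chain_def A_def)
    moreover have "F \<subseteq> \<Union>C"
      using that unfolding subset_chain_def A_def by blast
    ultimately show ?thesis
      unfolding A_def by (simp add: linear_graph_Union)
  qed
  ultimately obtain G where "G \<in> A" and max: "\<And>G'. G' \<in> A \<Longrightarrow> G \<subseteq> G' \<Longrightarrow> G' = G"
    using subset_Zorn_nonempty[of A] by blast
  then have G: "linear_graph R M N G" and FG: "F \<subseteq> G"
    by (auto simp: A_def)
  have "(\<zero>\<^bsub>M\<^esub>, \<zero>\<^bsub>N\<^esub>) \<in> G"
    using linear_graph_zero[OF G] FG K_zero by (auto simp: F_def)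
  moreover have "G' = G" if "linear_graph R M N G'" "G \<subseteq> G'" for G'
    using max that FG by (simp add: A_def)
  ultimately have total: "\<exists>b. (x, b) \<in> G" if "x \<in> carrier M" for x
    using maximal_linear_graph_total[OF inj G] that by blast
  obtain g where g: "g \<in> rmod_hom R M N" and g_G: "\<And>a b. (a, b) \<in> G \<Longrightarrow> g a = b"
    using linear_graph_total_hom[OF G total] by blast
  have "g x = f x" if "x \<in> K" for x
    using FG that by (auto simp: F_def intro: g_G)
  with g show ?thesis
    by blast
qed

lemma extend_along_mono:
  assumes inj: "injective_rmodule R N"
    and i: "i \<in> rmod_hom R M N" "inj_on i (carrier M)" and g: "g \<in> rmod_hom R M N"
  shows "\<exists>s\<in>rmod_hom R N N. \<forall>m\<in>carrier M. s (i m) = g m"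
proof -
  interpret NN: rmod_pair R N N ..
  define f where "f y = g (inv_into (carrier M) i y)" for y
  have f_i: "f (i m) = g m" if "m \<in> carrier M" for m
    unfolding f_def using i(2) that by simp
  have "f y \<in> carrier N" if "y \<in> i ` carrier M" for y
    using that f_i rmod_hom_closed[OF g] by auto
  moreover have "f (y \<oplus>\<^bsub>N\<^esub> y') = f y \<oplus>\<^bsub>N\<^esub> f y'"
    if "y \<in> i ` carrier M" "y' \<in> i ` carrier M" for y y'
    using that f_i rmod_hom_add[OF i(1), symmetric] rmod_hom_add[OF g] by auto
  moreover have "f (rsmult N y r) = rsmult N (f y) r" if "y \<in> i ` carrier M" "r \<in> carrier R" for y r
    using that f_i rmod_hom_rsmult[OF i(1), symmetric] rmod_hom_rsmult[OF g] by auto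
  ultimately have "\<exists>s\<in>rmod_hom R N N. \<forall>y\<in>i ` carrier M. s y = f y"
    by (rule NN.extend_from_rsubmodule[OF inj image_rsubmodule[OF i(1)]])
  then show ?thesis
    using f_i by simp
qed

end

section \<open>Endomorphisms of an injective hull\<close>

locale rmod_injective_hull = M: rmod R M + E: rmod R E
  for R :: "('a, 'c) ring_scheme"
    and M :: "('a, 'b, 'd) rmodule_scheme" and E :: "('a, 'e, 'f) rmodule_scheme" +
  fixes i :: "'b \<Rightarrow> 'e"
  assumes injective_hull: "injective_hull R M E i"

sublocale rmod_injective_hull \<subseteq> rmod_pair R M E ..

sublocale rmod_injective_hull \<subseteq> EE: rmod_pair R E E ..

context rmod_injective_hull
begin

lemma injective: "injective_rmodule R E"
  and i_hom: "i \<in> rmod_hom R M E"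
  and i_inj: "inj_on i (carrier M)"
  and essential: "essential_rsubmodule R E (i ` carrier M)"
  using injective_hull by (simp_all add: injective_hull_def)

lemma extend_endomorphism:
  assumes t: "t \<in> rmod_hom R M M"
  shows "\<exists>s\<in>rmod_hom R E E. \<forall>m\<in>carrier M. s (i m) = i (t m)"
proof -
  have "(\<lambda>m\<in>carrier M. i (t m)) \<in> rmod_hom R M E"
    by (rule M.hom_comp_closed[OF t i_hom])
  from extend_along_mono[OF injective i_hom i_inj this] show ?thesis
    by simp
qed

definition hull_extension :: "('b \<Rightarrow> 'b) \<Rightarrow> 'e \<Rightarrow> 'e" where
  "hull_extension t = (SOME s. s \<in> rmod_hom R E E \<and> (\<forall>m\<in>carrier M. s (i m) = i (t m)))"

lemma hull_extension:
  assumes "t \<in> rmod_hom R M M"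
  shows hull_extension_hom: "hull_extension t \<in> rmod_hom R E E"
    and hull_extension_apply: "\<And>m. m \<in> carrier M \<Longrightarrow> hull_extension t (i m) = i (t m)"
proof -
  have "hull_extension t \<in> rmod_hom R E E \<and> (\<forall>m\<in>carrier M. hull_extension t (i m) = i (t m))"
    unfolding hull_extension_def
    using someI_ex[OF extend_endomorphism[OF assms, unfolded Bex_def]] .
  then show "hull_extension t \<in> rmod_hom R E E" "\<And>m. m \<in> carrier M \<Longrightarrow> hull_extension t (i m) = i (t m)"
    by simp_all
qed

lemma ring_hom_F2_vanishes:
  assumes h: "h \<in> ring_hom (End_ring R E) F2" and s: "s \<in> rmod_hom R E E"
    and s_M: "\<And>m. m \<in> carrier M \<Longrightarrow> s (i m) = \<zero>\<^bsub>E\<^esub>"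
  shows "h s = \<zero>\<^bsub>F2\<^esub>"
proof -
  let ?S = "End_ring R E"
  interpret S: ring ?S by (rule E.ring_End_ring)
  interpret F2: cring F2 by (rule cring_F2)
  define u where "u = \<one>\<^bsub>?S\<^esub> \<ominus>\<^bsub>?S\<^esub> s"
  have "u \<in> carrier ?S"
    unfolding u_def using s E.hom_id_closed by (intro S.minus_closed) simp_all
  then have u: "u \<in> rmod_hom R E E"
    by simp
  have u_apply: "u x = x \<ominus>\<^bsub>E\<^esub> s x" if "x \<in> carrier E" for x
    using E.End_ring_minus_apply[OF _ s that] E.hom_id_closed that by (simp add: u_def)
  have "inj_on u (i ` carrier M)"
    by (rule inj_onI)
      (auto simp: u_apply s_M rmod_hom_closed[OF i_hom] E.minus_eq)
  then have "inj_on u (carrier E)"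
    by (rule EE.inj_on_if_essential[OF u essential])
  then obtain w where w: "w \<in> rmod_hom R E E"
    and w_u: "\<forall>x\<in>carrier E. w (u x) = (\<lambda>x\<in>carrier E. x) x"
    using EE.extend_along_mono[OF injective u _ E.hom_id_closed] by blast
  have "w \<otimes>\<^bsub>?S\<^esub> u = \<one>\<^bsub>?S\<^esub>"
    unfolding End_ring_simps by (rule restrict_ext) (use w_u in simp)
  then have "h u = \<one>\<^bsub>F2\<^esub>"
    using ring_hom_F2_left_invertible[OF S.ring_axioms h] u w by simp
  moreover have "s \<oplus>\<^bsub>?S\<^esub> u = \<one>\<^bsub>?S\<^esub>"
    using s S.one_closed unfolding u_def
    by (simp only: End_ring_simps(1)[symmetric] S.minus_eq S.a_lcomm[of s] S.r_neg S.r_zero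
      S.a_inv_closed)
  then have "h s \<oplus>\<^bsub>F2\<^esub> h u = \<one>\<^bsub>F2\<^esub>"
    using ring_hom_add[OF h, of s u] ring_hom_one[OF h] s u by simp
  ultimately show ?thesis
    using ring_hom_closed[OF h, of s] s by simp
qed

lemma ring_hom_F2_congruent:
  assumes h: "h \<in> ring_hom (End_ring R E) F2"
    and s: "s \<in> rmod_hom R E E" and s': "s' \<in> rmod_hom R E E"
    and agree: "\<And>m. m \<in> carrier M \<Longrightarrow> s (i m) = s' (i m)"
  shows "h s = h s'"
proof -
  let ?S = "End_ring R E"
  interpret S: ring ?S by (rule E.ring_End_ring)
  interpret h: ring_hom_ring ?S F2 h
    using S.ring_axioms cring_F2 h by (simp add: ring_hom_ringI2 cring.axioms(1))
  have "h (s \<ominus>\<^bsub>?S\<^esub> s') = \<zero>\<^bsub>F2\<^esub>"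
  proof (rule ring_hom_F2_vanishes[OF h])
    show "s \<ominus>\<^bsub>?S\<^esub> s' \<in> rmod_hom R E E"
      using s s' S.minus_closed by simp
    show "(s \<ominus>\<^bsub>?S\<^esub> s') (i m) = \<zero>\<^bsub>E\<^esub>" if "m \<in> carrier M" for m
      using E.End_ring_minus_apply[OF s s'] agree[OF that] rmod_hom_closed[OF i_hom that]
        rmod_hom_closed[OF s']
      by (simp add: E.minus_eq E.r_neg)
  qed
  moreover have "h (s \<ominus>\<^bsub>?S\<^esub> s') = h s \<ominus>\<^bsub>F2\<^esub> h s'"
    using s s' by (simp only: End_ring_simps(1)[symmetric] S.minus_eq S.a_inv_closed
      h.hom_add h.hom_a_inv h.S.minus_eq)
  ultimately show ?thesis
    using s s' h.hom_closed by (simp add: h.S.r_right_minus_eq)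
qed

lemma ring_hom_F2_induced:
  assumes h: "h \<in> ring_hom (End_ring R E) F2"
  shows "(\<lambda>t. h (hull_extension t)) \<in> ring_hom (End_ring R M) F2"
proof (rule ring_hom_memI)
  fix t assume "t \<in> carrier (End_ring R M)"
  then show "h (hull_extension t) \<in> carrier F2"
    using ring_hom_closed[OF h] hull_extension_hom by simp
next
  fix t t' assume "t \<in> carrier (End_ring R M)" "t' \<in> carrier (End_ring R M)"
  then have t: "t \<in> rmod_hom R M M" and t': "t' \<in> rmod_hom R M M"
    by simp_all
  have "h (hull_extension (\<lambda>x\<in>carrier M. t (t' x)))
      = h (\<lambda>y\<in>carrier E. hull_extension t (hull_extension t' y))"
    using t t' M.hom_comp_closed[OF t' t]
      E.hom_comp_closed[OF hull_extension_hom[OF t'] hull_extension_hom[OF t]]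
    by (intro ring_hom_F2_congruent[OF h])
      (simp_all add: hull_extension_hom hull_extension_apply rmod_hom_closed[OF i_hom]
        rmod_hom_closed[OF t'])
  also have "\<dots> = h (hull_extension t) \<otimes>\<^bsub>F2\<^esub> h (hull_extension t')"
    using ring_hom_mult[OF h] t t' hull_extension_hom by simp
  finally show "h (hull_extension (t \<otimes>\<^bsub>End_ring R M\<^esub> t'))
      = h (hull_extension t) \<otimes>\<^bsub>F2\<^esub> h (hull_extension t')"
    by simp
  have "h (hull_extension (\<lambda>x\<in>carrier M. t x \<oplus>\<^bsub>M\<^esub> t' x))
      = h (\<lambda>y\<in>carrier E. hull_extension t y \<oplus>\<^bsub>E\<^esub> hull_extension t' y)"
    using t t' M.hom_sum_closed E.hom_sum_closed
    by (intro ring_hom_F2_congruent[OF h])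
      (simp_all add: hull_extension_hom hull_extension_apply rmod_hom_closed[OF i_hom]
        rmod_hom_closed[OF t] rmod_hom_closed[OF t'] rmod_hom_add[OF i_hom])
  also have "\<dots> = h (hull_extension t) \<oplus>\<^bsub>F2\<^esub> h (hull_extension t')"
    using ring_hom_add[OF h] t t' hull_extension_hom by simp
  finally show "h (hull_extension (t \<oplus>\<^bsub>End_ring R M\<^esub> t'))
      = h (hull_extension t) \<oplus>\<^bsub>F2\<^esub> h (hull_extension t')"
    by simp
next
  have "h (hull_extension (\<lambda>x\<in>carrier M. x)) = h (\<lambda>y\<in>carrier E. y)"
    using M.hom_id_closed E.hom_id_closed
    by (intro ring_hom_F2_congruent[OF h])
      (simp_all add: hull_extension_hom hull_extension_apply rmod_hom_closed[OF i_hom])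
  then show "h (hull_extension \<one>\<^bsub>End_ring R M\<^esub>) = \<one>\<^bsub>F2\<^esub>"
    using ring_hom_one[OF h] by simp
qed

lemma has_F2_factor_End_descends:
  assumes "has_F2_factor (End_ring R E)"
  shows "has_F2_factor (End_ring R M)"
proof -
  obtain h where "h \<in> ring_hom (End_ring R E) F2"
    using assms has_F2_factor_iff_ring_hom[OF E.ring_End_ring] by blast
  then show ?thesis
    unfolding has_F2_factor_iff_ring_hom[OF M.ring_End_ring] using ring_hom_F2_induced by blast
qed

end

theorem lemma1:
  fixes R :: "('a, 'c) ring_scheme"
    and M :: "('a, 'b, 'd) rmodule_scheme"
    and E :: "('a, 'e, 'f) rmodule_scheme"
    and i :: "'b \<Rightarrow> 'e"
  assumes "ring R"
    and "right_module R M"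
    and "injective_hull R M E i"
    and "\<not> has_F2_factor (End_ring R M)"
  shows "\<not> has_F2_factor (End_ring R E)"
proof -
  (* The hypothesis ring R is already part of right_module R M. *)
  have "right_module R E"
    using assms(3) by (simp add: injective_hull_def injective_rmodule_def)
  with assms(2,3) interpret rmod_injective_hull R M E i
    by unfold_locales
  show ?thesis
    using has_F2_factor_End_descends assms(4) by blast
qed

end
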